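(* For any SCC $F:\Theta\to 2^Z\setminus\{\emptyset\}$ the following are equivalent: (i) $F$ is pure-Nash-implementable; (ii) $F$ is mixed-Nash-A-implementable; (iii) $F$ is mixed-Nash-B-implementable.
   Context: Standing setup: $\mathcal I=\{1,\dots,I\}$ finite, $I\ge 3$; $\Theta$ finite or countably infinite; $Z$ finite; $Y=\Delta(Z)$; $u_i^\theta:Z\to\mathbb R$, $U_i^\theta(y)=\sum_z y_zu_i^\theta(z)$. A mechanism $\mathcal M=\langle M=\times_iM_i,g:M\to Y\rangle$ has countable $M_i$; $g(\lambda)$ is the lottery induced by a profile $\lambda$; $PNE^{(\mathcal M,\theta)}$, $MNE^{(\mathcal M,\theta)}$ are the sets of pure and mixed Nash equilibria at $\theta$. $F$ is pure-Nash-implementable if some $\mathcal M$ satisfies $\bigcup_{\lambda\in PNE^{(\mathcal M,\theta)}}\mathrm{SUPP}(g[\lambda])=F(\theta)$ for all $\theta$; mixed-Nash-A-implementable if some $\mathcal M$ satisfies $\bigcup_{\lambda\in MNE^{(\mathcal M,\theta)}}\mathrm{SUPP}(g[\lambda])=F(\theta)$ for all $\theta$; mixed-Nash-B-implementable if some $\mathcal M$ satisfies $\bigcup_{\lambda\in MNE^{(\mathcal M,\theta)}}\mathrm{SUPP}(g[\lambda])=\bigcup_{\lambda\in PNE^{(\mathcal M,\theta)}}\mathrm{SUPP}(g[\lambda])=F(\theta)$ for all $\theta$. *)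

theory Defs
  imports "HOL-Probability.Product_PMF"
begin

(* Agents: a finite type 'i (|I| = CARD('i)); states: countable type 'th;
   outcomes: finite type 'z; lotteries Y = Delta(Z): 'z pmf.
   A mechanism is a pair (Msg, g): Msg i :: nat set is the (countable) message
   set of agent i, g maps message profiles to lotteries. *)

definition U :: "('z::finite \<Rightarrow> real) \<Rightarrow> 'z pmf \<Rightarrow> real" where
  "U v y = (\<Sum>z\<in>UNIV. pmf y z * v z)"

definition outcome :: "(('i::finite \<Rightarrow> nat) \<Rightarrow> 'z pmf) \<Rightarrow> ('i \<Rightarrow> nat pmf) \<Rightarrow> 'z pmf" where
  "outcome g str = bind_pmf (Pi_pmf UNIV undefined str) g"

definition is_PNE ::
  "('i::finite \<Rightarrow> nat set) \<Rightarrow> (('i \<Rightarrow> nat) \<Rightarrow> 'z::finite pmf) \<Rightarrow> ('i \<Rightarrow> 'th \<Rightarrow> 'z \<Rightarrow> real)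
    \<Rightarrow> 'th \<Rightarrow> ('i \<Rightarrow> nat) \<Rightarrow> bool" where
  "is_PNE Msg g u \<theta> m \<longleftrightarrow>
     (\<forall>i. m i \<in> Msg i) \<and>
     (\<forall>i. \<forall>m'\<in>Msg i. U (u i \<theta>) (g (m(i := m'))) \<le> U (u i \<theta>) (g m))"

definition is_MNE ::
  "('i::finite \<Rightarrow> nat set) \<Rightarrow> (('i \<Rightarrow> nat) \<Rightarrow> 'z::finite pmf) \<Rightarrow> ('i \<Rightarrow> 'th \<Rightarrow> 'z \<Rightarrow> real)
    \<Rightarrow> 'th \<Rightarrow> ('i \<Rightarrow> nat pmf) \<Rightarrow> bool" where
  "is_MNE Msg g u \<theta> str \<longleftrightarrow>
     (\<forall>i. set_pmf (str i) \<subseteq> Msg i) \<and>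
     (\<forall>i \<mu>. set_pmf \<mu> \<subseteq> Msg i \<longrightarrow>
        U (u i \<theta>) (outcome g (str(i := \<mu>))) \<le> U (u i \<theta>) (outcome g str))"

definition PNE_outcomes ::
  "('i::finite \<Rightarrow> nat set) \<Rightarrow> (('i \<Rightarrow> nat) \<Rightarrow> 'z::finite pmf) \<Rightarrow> ('i \<Rightarrow> 'th \<Rightarrow> 'z \<Rightarrow> real)
    \<Rightarrow> 'th \<Rightarrow> 'z set" where
  "PNE_outcomes Msg g u \<theta> = (\<Union>m\<in>{m. is_PNE Msg g u \<theta> m}. set_pmf (g m))"

definition MNE_outcomes ::
  "('i::finite \<Rightarrow> nat set) \<Rightarrow> (('i \<Rightarrow> nat) \<Rightarrow> 'z::finite pmf) \<Rightarrow> ('i \<Rightarrow> 'th \<Rightarrow> 'z \<Rightarrow> real)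
    \<Rightarrow> 'th \<Rightarrow> 'z set" where
  "MNE_outcomes Msg g u \<theta> = (\<Union>s\<in>{s. is_MNE Msg g u \<theta> s}. set_pmf (outcome g s))"

definition pure_Nash_implementable ::
  "('i::finite \<Rightarrow> 'th \<Rightarrow> 'z::finite \<Rightarrow> real) \<Rightarrow> ('th \<Rightarrow> 'z set) \<Rightarrow> bool" where
  "pure_Nash_implementable u F \<longleftrightarrow>
     (\<exists>(Msg :: 'i \<Rightarrow> nat set) g. \<forall>\<theta>. PNE_outcomes Msg g u \<theta> = F \<theta>)"

definition mixed_Nash_A_implementable ::
  "('i::finite \<Rightarrow> 'th \<Rightarrow> 'z::finite \<Rightarrow> real) \<Rightarrow> ('th \<Rightarrow> 'z set) \<Rightarrow> bool" where
  "mixed_Nash_A_implementable u F \<longleftrightarrow>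
     (\<exists>(Msg :: 'i \<Rightarrow> nat set) g. \<forall>\<theta>. MNE_outcomes Msg g u \<theta> = F \<theta>)"

definition mixed_Nash_B_implementable ::
  "('i::finite \<Rightarrow> 'th \<Rightarrow> 'z::finite \<Rightarrow> real) \<Rightarrow> ('th \<Rightarrow> 'z set) \<Rightarrow> bool" where
  "mixed_Nash_B_implementable u F \<longleftrightarrow>
     (\<exists>(Msg :: 'i \<Rightarrow> nat set) g. \<forall>\<theta>.
        MNE_outcomes Msg g u \<theta> = F \<theta> \<and> PNE_outcomes Msg g u \<theta> = F \<theta>)"

end

theory Submission
  imports Defs
begin

text \<open>To turn a pure Nash implementation into a mixed one (with at least three agents), replace
  the mechanism by a canonical one in the spirit of Maskin: each agent proposes a profile of the
  original mechanism, lists conditional deviations, names an integer and requests a profile.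
  If all but one agent consent to a proposal, it is played with the dissenter's deviation;
  otherwise the highest integer wins its request. In a mixed equilibrium, an agent facing no
  consensus must already get his best outcome, or a larger integer would pay, and a dissenter
  must already reply optimally, or a new conditional deviation would pay. So every outcome in
  the support of a mixed equilibrium is a pure equilibrium outcome of the original mechanism.

  Conversely, from a mixed implementation one obtains a pure one by letting each message name
  either a pure message or the sender's strategy in a chosen mixed equilibrium: the pure
  equilibria of the enlarged mechanism are exactly the mixed equilibria of the original one.\<close>

definition U_bound :: "('z::finite \<Rightarrow> real) \<Rightarrow> real" where
  "U_bound v = (\<Sum>z\<in>UNIV. \<bar>v z\<bar>)"

lemma abs_U_le_U_bound: "\<bar>U v y\<bar> \<le> U_bound v"
proof -
  have "\<bar>U v y\<bar> \<le> (\<Sum>z\<in>UNIV. \<bar>pmf y z * v z\<bar>)"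
    unfolding U_def by (rule sum_abs)
  also have "\<dots> \<le> (\<Sum>z\<in>UNIV. \<bar>v z\<bar>)"
    by (intro sum_mono) (auto simp: abs_mult intro!: mult_left_le_one_le pmf_le_1)
  finally show ?thesis by (simp add: U_bound_def)
qed

lemma U_bound_nonneg [simp]: "0 \<le> U_bound v"
  by (simp add: U_bound_def sum_nonneg)

lemma integrable_measure_pmf_bounded:
  fixes f :: "'a \<Rightarrow> real"
  assumes "\<And>x. \<bar>f x\<bar> \<le> B"
  shows "integrable (measure_pmf p) f"
  using assms by (intro measure_pmf.integrable_const_bound[where B = B]) auto

lemma integrable_U [simp]: "integrable (measure_pmf p) (\<lambda>x. U v (f x))"
  by (rule integrable_measure_pmf_bounded) (rule abs_U_le_U_bound)

lemma measure_pmf_expectation_le_const: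
  fixes f :: "'a \<Rightarrow> real"
  assumes "\<And>x. x \<in> set_pmf p \<Longrightarrow> f x \<le> c" and "integrable (measure_pmf p) f"
  shows "measure_pmf.expectation p f \<le> c"
  using assms by (intro measure_pmf.integral_le_const) (auto simp: AE_measure_pmf_iff)

lemma integrable_expectation_U [simp]:
  "integrable (measure_pmf p) (\<lambda>y. measure_pmf.expectation q (\<lambda>x. U v (f x y)))"
proof (rule integrable_measure_pmf_bounded)
  fix y
  have "\<bar>measure_pmf.expectation q (\<lambda>x. U v (f x y))\<bar>
      \<le> measure_pmf.expectation q (\<lambda>x. \<bar>U v (f x y)\<bar>)"
    by (rule integral_abs_bound)
  also have "\<dots> \<le> U_bound v"
    by (intro measure_pmf_expectation_le_const abs_U_le_U_bound
        integrable_measure_pmf_bounded[where B = "U_bound v"]) (auto intro: abs_U_le_U_bound)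
  finally show "\<bar>measure_pmf.expectation q (\<lambda>x. U v (f x y))\<bar> \<le> U_bound v" .
qed

lemma U_bind_pmf: "U v (bind_pmf p f) = measure_pmf.expectation p (\<lambda>x. U v (f x))"
proof -
  have "U v (bind_pmf p f) = (\<Sum>z\<in>UNIV. \<integral>x. pmf (f x) z * v z \<partial>measure_pmf p)"
    unfolding U_def pmf_bind by simp
  also have "\<dots> = (\<integral>x. (\<Sum>z\<in>UNIV. pmf (f x) z * v z) \<partial>measure_pmf p)"
    by (subst Bochner_Integration.integral_sum)
       (auto intro!: integrable_mult_left integrable_measure_pmf_bounded[where B = 1] simp: pmf_le_1)
  finally show ?thesis by (simp add: U_def)
qed

lemma Pi_pmf_fun_upd:
  fixes \<rho> :: "'a::finite \<Rightarrow> 'b pmf"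
  shows "Pi_pmf UNIV d (\<rho>(j := \<mu>)) =
    bind_pmf \<mu> (\<lambda>y. map_pmf (\<lambda>x. x(j := y)) (Pi_pmf UNIV d \<rho>))"
proof -
  have "Pi_pmf UNIV d (\<rho>(j := \<mu>)) = Pi_pmf (insert j (UNIV - {j})) d (\<rho>(j := \<mu>))"
    by (simp add: insert_absorb)
  also have "\<dots> = do {y \<leftarrow> \<mu>; f \<leftarrow> Pi_pmf (UNIV - {j}) d (\<rho>(j := \<mu>)); return_pmf (f(j := y))}"
    by (subst Pi_pmf_insert') auto
  also have "Pi_pmf (UNIV - {j}) d (\<rho>(j := \<mu>)) = Pi_pmf (UNIV - {j}) d \<rho>"
    by (intro Pi_pmf_cong) auto
  also have "\<dots> = map_pmf (\<lambda>f. f(j := d)) (Pi_pmf UNIV d \<rho>)"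
    by (rule Pi_pmf_remove) simp
  finally show ?thesis
    by (simp add: map_pmf_def bind_assoc_pmf bind_return_pmf fun_upd_upd del: fun_upd_apply)
qed

lemma U_outcome_fun_upd:
  "U v (outcome g (\<rho>(j := \<mu>))) = measure_pmf.expectation \<mu>
     (\<lambda>y. measure_pmf.expectation (Pi_pmf UNIV undefined \<rho>) (\<lambda>x. U v (g (x(j := y)))))"
  unfolding outcome_def Pi_pmf_fun_upd
  by (simp add: U_bind_pmf map_pmf_def bind_assoc_pmf bind_return_pmf)

lemma outcome_return_pmf: "outcome g (\<lambda>i. return_pmf (m i)) = g (m :: 'i::finite \<Rightarrow> nat)"
  unfolding outcome_def by (simp add: bind_return_pmf)

lemma is_PNE_imp_is_MNE:
  assumes "is_PNE Msg g u \<theta> m"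
  shows "is_MNE Msg g u \<theta> (\<lambda>i. return_pmf (m i))"
  unfolding is_MNE_def
proof (intro conjI allI impI)
  fix i show "set_pmf (return_pmf (m i)) \<subseteq> Msg i"
    using assms by (auto simp: is_PNE_def)
next
  fix i \<mu> assume \<mu>: "set_pmf \<mu> \<subseteq> Msg i"
  have "U (u i \<theta>) (outcome g ((\<lambda>i. return_pmf (m i))(i := \<mu>)))
      = measure_pmf.expectation \<mu> (\<lambda>y. U (u i \<theta>) (g (m(i := y))))"
    by (simp add: U_outcome_fun_upd bind_return_pmf)
  also have "\<dots> \<le> U (u i \<theta>) (g m)"
    using \<mu> assms by (intro measure_pmf_expectation_le_const) (auto simp: is_PNE_def)
  finally show "U (u i \<theta>) (outcome g ((\<lambda>i. return_pmf (m i))(i := \<mu>)))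
      \<le> U (u i \<theta>) (outcome g (\<lambda>i. return_pmf (m i)))"
    by (simp add: outcome_return_pmf)
qed

lemma PNE_outcomes_subset_MNE_outcomes: "PNE_outcomes Msg g u \<theta> \<subseteq> MNE_outcomes Msg g u \<theta>"
proof
  fix z assume "z \<in> PNE_outcomes Msg g u \<theta>"
  then obtain m where "is_PNE Msg g u \<theta> m" "z \<in> set_pmf (g m)"
    by (auto simp: PNE_outcomes_def)
  thus "z \<in> MNE_outcomes Msg g u \<theta>"
    unfolding MNE_outcomes_def
    by (intro UN_I[of "\<lambda>i. return_pmf (m i)"]) (auto simp: outcome_return_pmf is_PNE_imp_is_MNE)
qed

lemma is_MNE_support_best_reply:
  assumes mne: "is_MNE Msg g u \<theta> \<rho>" and y: "y \<in> set_pmf (\<rho> j)" and d: "d \<in> Msg j"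
  shows "measure_pmf.expectation (Pi_pmf UNIV undefined \<rho>) (\<lambda>x. U (u j \<theta>) (g (x(j := d))))
       \<le> measure_pmf.expectation (Pi_pmf UNIV undefined \<rho>) (\<lambda>x. U (u j \<theta>) (g (x(j := y))))"
proof -
  define pay where
    "pay d = measure_pmf.expectation (Pi_pmf UNIV undefined \<rho>) (\<lambda>x. U (u j \<theta>) (g (x(j := d))))" for d
  define V where "V = U (u j \<theta>) (outcome g \<rho>)"
  have V: "V = measure_pmf.expectation (\<rho> j) pay"
    using U_outcome_fun_upd[of "u j \<theta>" g \<rho> j "\<rho> j"] by (simp add: V_def pay_def[abs_def])
  have pay_le: "pay d' \<le> V" if "d' \<in> Msg j" for d'
  proof -
    have "pay d' = U (u j \<theta>) (outcome g (\<rho>(j := return_pmf d')))"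
      by (simp add: U_outcome_fun_upd pay_def)
    also have "\<dots> \<le> V" using mne that unfolding is_MNE_def V_def by auto
    finally show ?thesis .
  qed
  have supp: "set_pmf (\<rho> j) \<subseteq> Msg j" using mne by (auto simp: is_MNE_def)
  have int: "integrable (measure_pmf (\<rho> j)) pay" unfolding pay_def by simp
  have "measure_pmf.expectation (\<rho> j) (\<lambda>y. V - pay y) = 0"
    using V int by (simp add: Bochner_Integration.integral_diff)
  hence "AE y in measure_pmf (\<rho> j). V - pay y = 0"
    using int pay_le supp
    by (subst (asm) integral_nonneg_eq_0_iff_AE) (auto simp: AE_measure_pmf_iff)
  hence "pay y = V" using y by (auto simp: AE_measure_pmf_iff)
  with pay_le[OF d] show ?thesis by (simp add: pay_def)
qed

section \<open>Purification of mixed equilibria\<close>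

lemma is_PNE_mixed_extension_iff:
  fixes Msg Msg' :: "'i::finite \<Rightarrow> nat set" and strat :: "'i \<Rightarrow> nat \<Rightarrow> nat pmf"
  assumes strat_Msg: "\<And>i n. n \<in> Msg' i \<Longrightarrow> set_pmf (strat i n) \<subseteq> Msg i"
    and pure_strat: "\<And>i m. m \<in> Msg i \<Longrightarrow> \<exists>n\<in>Msg' i. strat i n = return_pmf m"
    and n: "\<And>i. n i \<in> Msg' i"
  shows "is_PNE Msg' (\<lambda>n. outcome g (\<lambda>i. strat i (n i))) u \<theta> n
     \<longleftrightarrow> is_MNE Msg g u \<theta> (\<lambda>i. strat i (n i))"
    (is "is_PNE Msg' ?g' u \<theta> n \<longleftrightarrow> is_MNE Msg g u \<theta> ?\<sigma>")
proof
  assume pne: "is_PNE Msg' ?g' u \<theta> n"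
  show "is_MNE Msg g u \<theta> ?\<sigma>"
    unfolding is_MNE_def
  proof (intro conjI allI impI)
    fix i show "set_pmf (?\<sigma> i) \<subseteq> Msg i" using strat_Msg n by auto
  next
    fix i \<mu> assume \<mu>: "set_pmf \<mu> \<subseteq> Msg i"
    have pure_le: "U (u i \<theta>) (outcome g (?\<sigma>(i := return_pmf y))) \<le> U (u i \<theta>) (outcome g ?\<sigma>)"
      if y: "y \<in> Msg i" for y
    proof -
      obtain n' where n': "n' \<in> Msg' i" "strat i n' = return_pmf y"
        using pure_strat[OF y] by blast
      have "?\<sigma>(i := return_pmf y) = (\<lambda>l. strat l ((n(i := n')) l))"
        using n' by auto
      thus ?thesis using pne n'(1) by (simp add: is_PNE_def)
    qed
    have "U (u i \<theta>) (outcome g (?\<sigma>(i := \<mu>)))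
        = measure_pmf.expectation \<mu> (\<lambda>y. U (u i \<theta>) (outcome g (?\<sigma>(i := return_pmf y))))"
      by (simp add: U_outcome_fun_upd)
    also have "\<dots> \<le> U (u i \<theta>) (outcome g ?\<sigma>)"
      using \<mu> pure_le by (intro measure_pmf_expectation_le_const) auto
    finally show "U (u i \<theta>) (outcome g (?\<sigma>(i := \<mu>))) \<le> U (u i \<theta>) (outcome g ?\<sigma>)" .
  qed
next
  assume mne: "is_MNE Msg g u \<theta> ?\<sigma>"
  show "is_PNE Msg' ?g' u \<theta> n"
    unfolding is_PNE_def
  proof (intro conjI allI ballI)
    fix i show "n i \<in> Msg' i" by (rule n)
  next
    fix i n' assume n': "n' \<in> Msg' i"
    have "(\<lambda>l. strat l ((n(i := n')) l)) = ?\<sigma>(i := strat i n')" by auto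
    thus "U (u i \<theta>) (?g' (n(i := n'))) \<le> U (u i \<theta>) (?g' n)"
      using mne strat_Msg[OF n'] unfolding is_MNE_def by auto
  qed
qed

lemma PNE_outcomes_mixed_extension:
  fixes Msg Msg' :: "'i::finite \<Rightarrow> nat set" and strat :: "'i \<Rightarrow> nat \<Rightarrow> nat pmf"
  assumes strat_Msg: "\<And>i n. n \<in> Msg' i \<Longrightarrow> set_pmf (strat i n) \<subseteq> Msg i"
    and pure_strat: "\<And>i m. m \<in> Msg i \<Longrightarrow> \<exists>n\<in>Msg' i. strat i n = return_pmf m"
    and MNE_strat: "\<And>z. z \<in> MNE_outcomes Msg g u \<theta> \<Longrightarrow> \<exists>n. (\<forall>i. n i \<in> Msg' i)
       \<and> is_MNE Msg g u \<theta> (\<lambda>i. strat i (n i)) \<and> z \<in> set_pmf (outcome g (\<lambda>i. strat i (n i)))"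
  shows "PNE_outcomes Msg' (\<lambda>n. outcome g (\<lambda>i. strat i (n i))) u \<theta> = MNE_outcomes Msg g u \<theta>"
proof (intro equalityI subsetI)
  fix z assume "z \<in> PNE_outcomes Msg' (\<lambda>n. outcome g (\<lambda>i. strat i (n i))) u \<theta>"
  then obtain n where pne: "is_PNE Msg' (\<lambda>n. outcome g (\<lambda>i. strat i (n i))) u \<theta> n"
    and z: "z \<in> set_pmf (outcome g (\<lambda>i. strat i (n i)))"
    by (auto simp: PNE_outcomes_def)
  have n: "\<And>i. n i \<in> Msg' i" using pne by (simp add: is_PNE_def)
  have "is_PNE Msg' (\<lambda>n. outcome g (\<lambda>i. strat i (n i))) u \<theta> n
      \<longleftrightarrow> is_MNE Msg g u \<theta> (\<lambda>i. strat i (n i))"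
    using strat_Msg pure_strat n by (rule is_PNE_mixed_extension_iff)
  hence "is_MNE Msg g u \<theta> (\<lambda>i. strat i (n i))" using pne by simp
  thus "z \<in> MNE_outcomes Msg g u \<theta>" using z by (auto simp: MNE_outcomes_def)
next
  fix z assume "z \<in> MNE_outcomes Msg g u \<theta>"
  then obtain n where n: "\<And>i. n i \<in> Msg' i" and mne: "is_MNE Msg g u \<theta> (\<lambda>i. strat i (n i))"
    and z: "z \<in> set_pmf (outcome g (\<lambda>i. strat i (n i)))"
    using MNE_strat by blast
  have "is_PNE Msg' (\<lambda>n. outcome g (\<lambda>i. strat i (n i))) u \<theta> n
      \<longleftrightarrow> is_MNE Msg g u \<theta> (\<lambda>i. strat i (n i))"
    using strat_Msg pure_strat n by (rule is_PNE_mixed_extension_iff)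
  hence "is_PNE Msg' (\<lambda>n. outcome g (\<lambda>i. strat i (n i))) u \<theta> n" using mne by simp
  thus "z \<in> PNE_outcomes Msg' (\<lambda>n. outcome g (\<lambda>i. strat i (n i))) u \<theta>"
    using z by (auto simp: PNE_outcomes_def)
qed

text \<open>Each agent may send a pure message of the old mechanism or a label \<open>(\<theta>, z)\<close>
  standing for his part of a mixed equilibrium at \<open>\<theta>\<close> that puts weight on \<open>z\<close>.\<close>

lemma mixed_Nash_A_imp_pure_Nash_implementable:
  fixes u :: "'i::finite \<Rightarrow> 'th::countable \<Rightarrow> 'z::finite \<Rightarrow> real"
  assumes "mixed_Nash_A_implementable u F"
  shows "pure_Nash_implementable u F"
proof -
  obtain Msg :: "'i \<Rightarrow> nat set" and g where MNE_F: "\<And>\<theta>. MNE_outcomes Msg g u \<theta> = F \<theta>"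
    using assms unfolding mixed_Nash_A_implementable_def by blast
  have ex: "\<exists>\<sigma>. is_MNE Msg g u \<theta> \<sigma> \<and> z \<in> set_pmf (outcome g \<sigma>)" if "z \<in> F \<theta>" for \<theta> z
    using that MNE_F[of \<theta>] unfolding MNE_outcomes_def by auto
  define \<sigma> where "\<sigma> \<theta> z = (SOME \<sigma>. is_MNE Msg g u \<theta> \<sigma> \<and> z \<in> set_pmf (outcome g \<sigma>))" for \<theta> z
  have \<sigma>: "is_MNE Msg g u \<theta> (\<sigma> \<theta> z) \<and> z \<in> set_pmf (outcome g (\<sigma> \<theta> z))" if "z \<in> F \<theta>" for \<theta> z
    unfolding \<sigma>_def by (rule someI_ex[OF ex[OF that]])
  define Msg' where "Msg' i = to_nat ` (Inl ` Msg i \<union> Inr ` {(\<theta>, z). z \<in> F \<theta>})" for i :: 'i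
  define strat :: "'i \<Rightarrow> nat \<Rightarrow> nat pmf" where
    "strat i n = (case from_nat n :: nat + 'th \<times> 'z of
       Inl m \<Rightarrow> return_pmf m | Inr (\<theta>, z) \<Rightarrow> \<sigma> \<theta> z i)" for i n
  have "PNE_outcomes Msg' (\<lambda>n. outcome g (\<lambda>i. strat i (n i))) u \<theta> = F \<theta>" for \<theta>
    unfolding MNE_F[symmetric]
  proof (rule PNE_outcomes_mixed_extension)
    show "set_pmf (strat i n) \<subseteq> Msg i" if "n \<in> Msg' i" for i n
      using that \<sigma> unfolding Msg'_def strat_def is_MNE_def by fastforce
    show "\<exists>n\<in>Msg' i. strat i n = return_pmf m" if "m \<in> Msg i" for i m
      using that by (intro bexI[of _ "to_nat (Inl m :: nat + 'th \<times> 'z)"]) (auto simp: strat_def Msg'_def)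
    fix z assume "z \<in> MNE_outcomes Msg g u \<theta>"
    hence z: "z \<in> F \<theta>" by (simp add: MNE_F)
    have "(\<lambda>i. strat i (to_nat (Inr (\<theta>, z) :: nat + 'th \<times> 'z))) = \<sigma> \<theta> z"
      by (auto simp: strat_def)
    thus "\<exists>n. (\<forall>i. n i \<in> Msg' i) \<and> is_MNE Msg g u \<theta> (\<lambda>i. strat i (n i))
        \<and> z \<in> set_pmf (outcome g (\<lambda>i. strat i (n i)))"
      using z \<sigma>[OF z] by (intro exI[of _ "\<lambda>i. to_nat (Inr (\<theta>, z) :: nat + 'th \<times> 'z)"]) (auto simp: Msg'_def)
  qed
  thus ?thesis unfolding pure_Nash_implementable_def by blast
qed

section \<open>The canonical mechanism\<close>

text \<open>A message \<open>(p, cs, k, r)\<close> consists of a proposed profile \<open>p\<close>, a list \<open>cs\<close> of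
  conditional deviations \<open>(q, m)\<close> (``if the others unanimously propose \<open>q\<close>, I play \<open>m\<close>''),
  an integer \<open>k\<close> and a requested profile \<open>r\<close>. If all agents but \<open>j\<close> propose \<open>p\<close> with integer
  \<open>0\<close> and no conditional deviation at \<open>p\<close>, then \<open>j\<close>'s reply to \<open>p\<close> is implemented;
  otherwise the highest integer wins and gets its requested profile.\<close>

type_synonym 'i canon_msg = "('i \<Rightarrow> nat) \<times> (('i \<Rightarrow> nat) \<times> nat) list \<times> nat \<times> ('i \<Rightarrow> nat)"

definition proposal :: "'i canon_msg \<Rightarrow> 'i \<Rightarrow> nat" where "proposal x = fst x"
definition claims :: "'i canon_msg \<Rightarrow> (('i \<Rightarrow> nat) \<times> nat) list" where "claims x = fst (snd x)"
definition bid :: "'i canon_msg \<Rightarrow> nat" where "bid x = fst (snd (snd x))"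
definition request :: "'i canon_msg \<Rightarrow> 'i \<Rightarrow> nat" where "request x = snd (snd (snd x))"

lemma canon_msg_sel [simp]:
  "proposal (p, cs, k, r) = p" "claims (p, cs, k, r) = cs" "bid (p, cs, k, r) = k" "request (p, cs, k, r) = r"
  by (simp_all add: proposal_def claims_def bid_def request_def)

definition consents :: "'i canon_msg \<Rightarrow> ('i \<Rightarrow> nat) \<Rightarrow> bool" where
  "consents x p \<longleftrightarrow> proposal x = p \<and> bid x = 0 \<and> map_of (claims x) p = None"

definition reply :: "'i canon_msg \<Rightarrow> ('i \<Rightarrow> nat) \<Rightarrow> 'i \<Rightarrow> nat" where
  "reply x p i = (case map_of (claims x) p of None \<Rightarrow> p i | Some m \<Rightarrow> m)"

definition others_consent :: "('i \<Rightarrow> 'i canon_msg) \<Rightarrow> 'i \<Rightarrow> ('i \<Rightarrow> nat) \<Rightarrow> bool" where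
  "others_consent X j p \<longleftrightarrow> (\<forall>l. l \<noteq> j \<longrightarrow> consents (X l) p)"

definition top_bidder :: "('i \<Rightarrow> 'i canon_msg) \<Rightarrow> 'i" where
  "top_bidder X = (SOME i. \<forall>l. bid (X l) \<le> bid (X i))"

lemma top_bidder_eqI:
  assumes "\<And>l. l \<noteq> i \<Longrightarrow> bid (X l) < bid (X i)"
  shows "top_bidder X = i"
proof -
  have "\<forall>l. bid (X l) \<le> bid (X (top_bidder X))"
    unfolding top_bidder_def by (rule someI[of _ i]) (metis assms less_imp_le order_refl)
  thus ?thesis using assms by (metis not_le)
qed

lemma reply_consents: "consents x p \<Longrightarrow> reply x p i = p i"
  by (simp add: consents_def reply_def)

lemma others_consent_fun_upd_self [simp]: "others_consent (X(j := y)) j p = others_consent X j p"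
  by (simp add: others_consent_def)

lemma exists_third:
  fixes a b :: "'i::finite"
  assumes "CARD('i) \<ge> 3"
  obtains l where "l \<noteq> a" "l \<noteq> b"
proof -
  have "\<not> (UNIV :: 'i set) \<subseteq> {a, b}"
  proof
    assume "(UNIV :: 'i set) \<subseteq> {a, b}"
    hence "CARD('i) \<le> card {a, b}" by (intro card_mono) auto
    also have "\<dots> \<le> 2" by (simp add: card_insert_if)
    finally show False using assms by simp
  qed
  thus ?thesis using that by blast
qed

text \<open>With at least three agents, two dissenters cannot both face a unanimous rest: a third
  agent's proposal pins down the profile.\<close>

lemma others_consent_unique:
  assumes "CARD('i::finite) \<ge> 3" "others_consent X (j::'i) p" "others_consent X j' p'"
  shows "p = p'"
proof -
  obtain l where "l \<noteq> j" "l \<noteq> j'" using exists_third[OF assms(1)] .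
  thus ?thesis using assms by (auto simp: others_consent_def consents_def)
qed

lemma others_consent_reply_eq:
  assumes "CARD('i::finite) \<ge> 3" "others_consent X (j::'i) p" "others_consent X j' p'"
  shows "p(j := reply (X j) p j) = p'(j' := reply (X j') p' j')"
proof (cases "j = j'")
  case True thus ?thesis using others_consent_unique[OF assms] by simp
next
  case False
  have "p = p'" using others_consent_unique[OF assms] .
  moreover have "consents (X j) p'" "consents (X j') p"
    using assms False \<open>p = p'\<close> by (auto simp: others_consent_def)
  ultimately show ?thesis by (simp add: reply_consents)
qed

lemma others_consent_unique_dissenter:
  assumes "CARD('i::finite) \<ge> 3" "others_consent X (j::'i) p" "\<not> consents (X j) p" "l \<noteq> j"
  shows "\<not> others_consent X l p'"
proof
  assume l: "others_consent X l p'"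
  have "p = p'" using others_consent_unique[OF assms(1,2) l] .
  thus False using l assms(3,4) by (auto simp: others_consent_def)
qed

locale canonical_mechanism =
  fixes Msg :: "'i::finite \<Rightarrow> nat set" and g :: "('i \<Rightarrow> nat) \<Rightarrow> 'z::finite pmf"
  assumes card_ge_3: "CARD('i) \<ge> 3"
begin

definition canon_outcome :: "('i \<Rightarrow> 'i canon_msg) \<Rightarrow> 'z pmf" where
  "canon_outcome X = (if \<exists>jp. others_consent X (fst jp) (snd jp)
     then (case SOME jp. others_consent X (fst jp) (snd jp) of (j, p) \<Rightarrow> g (p(j := reply (X j) p j)))
     else g (request (X (top_bidder X))))"

lemma canon_outcome_others_consent:
  assumes "others_consent X j p"
  shows "canon_outcome X = g (p(j := reply (X j) p j))"
proof -
  have ex: "\<exists>jp. others_consent X (fst jp) (snd jp)"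
    using assms by (intro exI[of _ "(j, p)"]) simp
  obtain j' p' where jp: "(SOME jp. others_consent X (fst jp) (snd jp)) = (j', p')"
    by (cases "SOME jp. others_consent X (fst jp) (snd jp)")
  have "others_consent X j' p'" using someI_ex[OF ex] jp by simp
  thus ?thesis
    using ex jp others_consent_reply_eq[OF card_ge_3 assms, of j' p'] by (simp add: canon_outcome_def)
qed

lemma canon_outcome_top_bidder:
  assumes "\<And>j p. \<not> others_consent X j p"
  shows "canon_outcome X = g (request (X (top_bidder X)))"
  using assms by (simp add: canon_outcome_def)

definition profiles :: "('i \<Rightarrow> nat) set" where
  "profiles = {q. \<forall>l. q l \<in> Msg l}"

definition well_formed :: "'i \<Rightarrow> 'i canon_msg \<Rightarrow> bool" where
  "well_formed i x \<longleftrightarrow> proposal x \<in> profiles \<and> request x \<in> profiles \<and> (\<forall>(q, m)\<in>set (claims x). m \<in> Msg i)"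

definition canon_Msg :: "'i \<Rightarrow> nat set" where
  "canon_Msg i = to_nat ` {x. well_formed i x}"

definition decode :: "('i \<Rightarrow> nat) \<Rightarrow> 'i \<Rightarrow> 'i canon_msg" where
  "decode n i = from_nat (n i)"

definition canon_g :: "('i \<Rightarrow> nat) \<Rightarrow> 'z pmf" where
  "canon_g n = canon_outcome (decode n)"

lemma decode_fun_upd_to_nat [simp]: "decode (n(j := to_nat y)) = (decode n)(j := y)"
  by (auto simp: decode_def)

lemma reply_in_Msg: "well_formed i x \<Longrightarrow> p \<in> profiles \<Longrightarrow> reply x p i \<in> Msg i"
  by (auto simp: reply_def well_formed_def profiles_def split: option.splits dest!: map_of_SomeD)

lemma to_nat_in_canon_Msg: "well_formed i x \<Longrightarrow> to_nat x \<in> canon_Msg i"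
  by (auto simp: canon_Msg_def)

lemma canon_Msg_D: "n \<in> canon_Msg i \<Longrightarrow> well_formed i (from_nat n) \<and> to_nat (from_nat n :: 'i canon_msg) = n"
  by (auto simp: canon_Msg_def)

lemma others_consent_profiles:
  assumes "\<And>l. well_formed l (X l)" "others_consent X j p"
  shows "p \<in> profiles"
proof -
  obtain l where "l \<noteq> j" using exists_third[OF card_ge_3] by blast
  thus ?thesis using assms by (auto simp: others_consent_def consents_def well_formed_def)
qed

lemma canon_outcome_well_formed:
  assumes "\<And>l. well_formed l (X l)"
  obtains q where "q \<in> profiles" "canon_outcome X = g q"
proof (cases "\<exists>j p. others_consent X j p")
  case True
  then obtain j p where jp: "others_consent X j p" by blast
  have "p(j := reply (X j) p j) \<in> profiles"
    using others_consent_profiles[OF assms jp] reply_in_Msg[OF assms]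
    by (auto simp: profiles_def)
  thus ?thesis using that canon_outcome_others_consent[OF jp] by blast
next
  case False
  thus ?thesis
    using that canon_outcome_top_bidder[of X] assms[of "top_bidder X"] by (auto simp: well_formed_def)
qed

end

section \<open>Mixed equilibria of the canonical mechanism\<close>

locale canonical_mechanism_MNE = canonical_mechanism Msg g
  for Msg :: "'i::finite \<Rightarrow> nat set" and g :: "('i \<Rightarrow> nat) \<Rightarrow> 'z::finite pmf" +
  fixes u :: "'i \<Rightarrow> 'th \<Rightarrow> 'z \<Rightarrow> real" and \<theta> :: 'th and \<rho> :: "'i \<Rightarrow> nat pmf"
  assumes mne: "is_MNE canon_Msg canon_g u \<theta> \<rho>"
begin

abbreviation P :: "('i \<Rightarrow> nat) pmf" where "P \<equiv> Pi_pmf UNIV undefined \<rho>"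
abbreviation v :: "'i \<Rightarrow> 'z \<Rightarrow> real" where "v j \<equiv> u j \<theta>"

definition best :: "'i \<Rightarrow> real" where
  "best j = (SUP q\<in>profiles. U (v j) (g q))"

definition payoff :: "'i \<Rightarrow> 'i canon_msg \<Rightarrow> ('i \<Rightarrow> nat) \<Rightarrow> real" where
  "payoff j y n = U (v j) (canon_outcome ((decode n)(j := y)))"

definition others_agree :: "'i \<Rightarrow> ('i \<Rightarrow> nat) \<Rightarrow> bool" where
  "others_agree j n \<longleftrightarrow> (\<exists>p. others_consent (decode n) j p)"

lemma set_pmf_P_D: "n \<in> set_pmf P \<Longrightarrow> n i \<in> set_pmf (\<rho> i)"
  by (auto simp: set_Pi_pmf PiE_dflt_def)

lemma set_pmf_P_well_formed:
  "n \<in> set_pmf P \<Longrightarrow> well_formed i (decode n i) \<and> to_nat (decode n i) = n i"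
  using set_pmf_P_D[of n i] mne canon_Msg_D[of "n i" i] by (auto simp: is_MNE_def decode_def)

lemma bdd_above_U_profiles: "bdd_above ((\<lambda>q. U (v j) (g q)) ` profiles)"
  by (rule bdd_aboveI[of _ "U_bound (v j)"]) (auto intro: order_trans[OF abs_ge_self abs_U_le_U_bound])

lemma U_le_best: "q \<in> profiles \<Longrightarrow> U (v j) (g q) \<le> best j"
  unfolding best_def by (rule cSUP_upper[OF _ bdd_above_U_profiles])

lemma nonpos_if_le_best_minus:
  assumes "profiles \<noteq> {}" and "\<And>r. r \<in> profiles \<Longrightarrow> x \<le> best j - U (v j) (g r)"
  shows "x \<le> 0"
proof (rule ccontr)
  assume "\<not> x \<le> 0"
  hence "best j - x < best j" by simp
  then obtain r where "r \<in> profiles" "best j - x < U (v j) (g r)"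
    using less_cSUP_iff[OF assms(1) bdd_above_U_profiles] unfolding best_def by blast
  thus False using assms(2) by fastforce
qed

lemma abs_payoff_le: "\<bar>payoff j y n\<bar> \<le> U_bound (v j)"
  unfolding payoff_def by (rule abs_U_le_U_bound)

lemma payoff_le_best: "n \<in> set_pmf P \<Longrightarrow> well_formed j y \<Longrightarrow> payoff j y n \<le> best j"
  using canon_outcome_well_formed[of "(decode n)(j := y)"] set_pmf_P_well_formed[of n]
  by (metis U_le_best fun_upd_apply payoff_def)

lemma payoff_others_consent:
  "others_consent (decode n) j p \<Longrightarrow> payoff j y n = U (v j) (g (p(j := reply y p j)))"
  using canon_outcome_others_consent[of "(decode n)(j := y)" j p] by (simp add: payoff_def)

lemma expectation_payoff_le:
  assumes "to_nat y \<in> set_pmf (\<rho> j)" and "well_formed j d"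
  shows "measure_pmf.expectation P (payoff j d) \<le> measure_pmf.expectation P (payoff j y)"
  using is_MNE_support_best_reply[OF mne assms(1) to_nat_in_canon_Msg[OF assms(2)]]
  by (simp add: canon_g_def payoff_def[abs_def])

lemma eventually_payoff_raised_bid:
  "\<forall>\<^sub>F K in sequentially. payoff j (proposal d, claims d, Suc K, request d) n
     = (if others_agree j n then payoff j d n else U (v j) (g (request d)))"
proof (cases "others_agree j n")
  case True
  then obtain p where "others_consent (decode n) j p" by (auto simp: others_agree_def)
  thus ?thesis using True by (simp add: payoff_others_consent reply_def)
next
  case False
  define K0 where "K0 = Max (range (\<lambda>l. bid (decode n l)))"
  have "payoff j (proposal d, claims d, Suc K, request d) n = U (v j) (g (request d))" if "K0 \<le> K" for K
  proof -
    let ?X = "(decode n)(j := (proposal d, claims d, Suc K, request d))"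
    have none: "\<not> others_consent ?X l p" for l p
      using False by (cases "l = j") (auto simp: others_consent_def consents_def others_agree_def)
    have "bid (decode n l) \<le> K0" for l unfolding K0_def by (rule Max_ge) auto
    hence "top_bidder ?X = j"
      using that by (intro top_bidder_eqI) (auto intro: le_imp_less_Suc order_trans)
    thus ?thesis using canon_outcome_top_bidder[OF none] by (simp add: payoff_def)
  qed
  thus ?thesis using False unfolding eventually_sequentially by auto
qed

text \<open>Raising the integer of a deviation \<open>d\<close> without bound, agent \<open>j\<close> eventually wins the integer
  game wherever the others do not agree, so in the limit he obtains \<open>request d\<close> there.\<close>

lemma expectation_limit_deviation_le:
  assumes y: "to_nat y \<in> set_pmf (\<rho> j)" and d: "well_formed j d"
  shows "measure_pmf.expectation P (\<lambda>n. if others_agree j n then payoff j d n else U (v j) (g (request d)))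
       \<le> measure_pmf.expectation P (payoff j y)"
proof -
  define d' where "d' K = (proposal d, claims d, Suc K, request d)" for K
  have "(\<lambda>K. payoff j (d' K) n) \<longlonglongrightarrow> (if others_agree j n then payoff j d n else U (v j) (g (request d)))"
    for n
    unfolding d'_def by (rule tendsto_eventually[OF eventually_payoff_raised_bid])
  hence "(\<lambda>K. measure_pmf.expectation P (payoff j (d' K)))
      \<longlonglongrightarrow> measure_pmf.expectation P (\<lambda>n. if others_agree j n then payoff j d n else U (v j) (g (request d)))"
    by (intro integral_dominated_convergence[where w = "\<lambda>_. U_bound (v j)"])
       (auto intro: AE_pmfI abs_payoff_le)
  moreover have "measure_pmf.expectation P (payoff j (d' K)) \<le> measure_pmf.expectation P (payoff j y)" for K
    using d by (intro expectation_payoff_le[OF y]) (simp add: d'_def well_formed_def)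
  ultimately show ?thesis by (intro LIMSEQ_le_const2) auto
qed

lemma expectation_deviation_gain_le:
  assumes y: "to_nat y \<in> set_pmf (\<rho> j)" and d: "well_formed j d"
  shows "measure_pmf.expectation P
           (\<lambda>n. if others_agree j n then payoff j d n - payoff j y n else best j - payoff j y n)
       \<le> best j - U (v j) (g (request d))"
proof -
  define c where "c = best j - U (v j) (g (request d))"
  have c: "0 \<le> c" using d U_le_best by (auto simp: c_def well_formed_def)
  define L where "L n = (if others_agree j n then payoff j d n else U (v j) (g (request d)))" for n
  define a where "a n = (if others_agree j n then 0 else c)" for n
  have int_L: "integrable (measure_pmf P) L"
    by (rule integrable_measure_pmf_bounded[where B = "U_bound (v j)"])
       (auto simp: L_def abs_payoff_le abs_U_le_U_bound)
  have int_h: "integrable (measure_pmf P) (payoff j y)"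
    by (rule integrable_measure_pmf_bounded) (rule abs_payoff_le)
  have int_a: "integrable (measure_pmf P) a"
    by (rule integrable_measure_pmf_bounded[where B = c]) (auto simp: a_def c)
  have "(\<lambda>n. if others_agree j n then payoff j d n - payoff j y n else best j - payoff j y n)
      = (\<lambda>n. (L n - payoff j y n) + a n)"
    by (auto simp: L_def a_def c_def)
  hence "measure_pmf.expectation P
           (\<lambda>n. if others_agree j n then payoff j d n - payoff j y n else best j - payoff j y n)
      = (measure_pmf.expectation P L - measure_pmf.expectation P (payoff j y)) + measure_pmf.expectation P a"
    using int_L int_h int_a by (simp add: Bochner_Integration.integral_add Bochner_Integration.integral_diff)
  moreover have "measure_pmf.expectation P L \<le> measure_pmf.expectation P (payoff j y)"
    unfolding L_def by (rule expectation_limit_deviation_le[OF y d])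
  moreover have "measure_pmf.expectation P a \<le> c"
    using c int_a by (intro measure_pmf_expectation_le_const) (auto simp: a_def)
  ultimately show ?thesis by (simp add: c_def)
qed

lemma payoff_eq_best_unless_others_agree:
  assumes y: "to_nat y \<in> set_pmf (\<rho> j)" "well_formed j y"
    and n: "n \<in> set_pmf P" "\<not> others_agree j n"
  shows "payoff j y n = best j"
proof -
  define f where "f n = (if others_agree j n then 0 else best j - payoff j y n)" for n
  have f_nonneg: "0 \<le> f n" if "n \<in> set_pmf P" for n
    using payoff_le_best[OF that y(2)] by (simp add: f_def)
  have "measure_pmf.expectation P f \<le> best j - U (v j) (g r)" if r: "r \<in> profiles" for r
  proof -
    define d where "d = (proposal y, claims y, 0::nat, r)"
    have "well_formed j d" using y(2) r by (simp add: d_def well_formed_def)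
    moreover have "payoff j d n = payoff j y n" if "others_agree j n" for n
      using that by (auto simp: others_agree_def payoff_others_consent reply_def d_def)
    hence "(\<lambda>n. if others_agree j n then payoff j d n - payoff j y n else best j - payoff j y n) = f"
      by (auto simp: f_def)
    ultimately show ?thesis using expectation_deviation_gain_le[OF y(1)] by (fastforce simp: d_def)
  qed
  hence "measure_pmf.expectation P f \<le> 0"
    using y(2) by (intro nonpos_if_le_best_minus) (auto simp: well_formed_def)
  moreover have int_f: "integrable (measure_pmf P) f"
    by (rule integrable_measure_pmf_bounded[where B = "\<bar>best j\<bar> + U_bound (v j)"])
       (auto simp: f_def intro: order_trans[OF abs_triangle_ineq4] add_left_mono abs_payoff_le)
  ultimately have "measure_pmf.expectation P f = 0"
    using f_nonneg by (intro antisym Bochner_Integration.integral_nonneg_AE) (auto simp: AE_measure_pmf_iff)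
  hence "AE n in measure_pmf P. f n = 0"
    using int_f f_nonneg by (subst (asm) integral_nonneg_eq_0_iff_AE) (auto simp: AE_measure_pmf_iff)
  thus ?thesis using n by (auto simp: AE_measure_pmf_iff f_def)
qed

lemma U_canon_g_eq_best_unless_others_agree:
  assumes "n \<in> set_pmf P" "\<not> others_agree j n"
  shows "U (v j) (canon_g n) = best j"
  using payoff_eq_best_unless_others_agree[of "decode n j" j n] assms set_pmf_P_well_formed[OF assms(1)]
    set_pmf_P_D[OF assms(1)]
  by (simp add: payoff_def canon_g_def)

lemma deviation_gain_new_claim:
  assumes y: "to_nat y \<in> set_pmf (\<rho> i)" "well_formed i y" and n: "n \<in> set_pmf P"
  shows "(if others_agree i n then payoff i (proposal y, (p, m') # claims y, k, r) n - payoff i y n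
          else best i - payoff i y n)
       = (U (v i) (g (p(i := m'))) - U (v i) (g (p(i := reply y p i))))
           * indicator {n. others_consent (decode n) i p} n"
proof (cases "others_agree i n")
  case agree: True
  then obtain p' where p': "others_consent (decode n) i p'" by (auto simp: others_agree_def)
  show ?thesis
  proof (cases "p' = p")
    case True thus ?thesis using p' agree by (simp add: payoff_others_consent reply_def)
  next
    case False
    hence "\<not> others_consent (decode n) i p"
      using p' others_consent_unique[OF card_ge_3, of "decode n" i p' i p] by auto
    thus ?thesis using p' agree False by (simp add: payoff_others_consent reply_def)
  qed
next
  case False
  thus ?thesis using payoff_eq_best_unless_others_agree[OF y n] by (simp add: others_agree_def)
qed

text \<open>The dissenter's reply to a profile that the others agree on with positive probability is a
  best response: otherwise he could add a conditional deviation to the better message.\<close>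

lemma reply_best_response:
  assumes n0: "n0 \<in> set_pmf P" "others_consent (decode n0) i p" and m': "m' \<in> Msg i"
  shows "U (v i) (g (p(i := m'))) \<le> U (v i) (g (p(i := reply (decode n0 i) p i)))"
proof -
  define y where "y = decode n0 i"
  have y: "to_nat y \<in> set_pmf (\<rho> i)" "well_formed i y"
    using set_pmf_P_well_formed[OF n0(1), of i] set_pmf_P_D[OF n0(1), of i] by (auto simp: y_def)
  have p: "p \<in> profiles"
    using others_consent_profiles[OF _ n0(2)] set_pmf_P_well_formed[OF n0(1)] by blast
  define c where "c = U (v i) (g (p(i := m'))) - U (v i) (g (p(i := reply y p i)))"
  define E where "E = {n. others_consent (decode n) i p}"
  have "c * measure_pmf.prob P E \<le> best i - U (v i) (g r)" if r: "r \<in> profiles" for r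
  proof -
    define d where "d = (proposal y, (p, m') # claims y, 0::nat, r)"
    have d: "well_formed i d" using y(2) r m' by (auto simp: d_def well_formed_def)
    have "measure_pmf.expectation P
            (\<lambda>n. if others_agree i n then payoff i d n - payoff i y n else best i - payoff i y n)
        = measure_pmf.expectation P (\<lambda>n. c * indicator E n)"
      using deviation_gain_new_claim[OF y] unfolding c_def E_def d_def
      by (intro integral_cong_AE) (auto simp: AE_measure_pmf_iff)
    also have "\<dots> = c * measure_pmf.prob P E" by simp
    finally show ?thesis using expectation_deviation_gain_le[OF y(1) d] by (simp add: d_def)
  qed
  hence "c * measure_pmf.prob P E \<le> 0"
    using p by (intro nonpos_if_le_best_minus) auto
  moreover have "measure_pmf.prob P {n0} \<le> measure_pmf.prob P E"
    using n0 by (intro measure_pmf.finite_measure_mono) (auto simp: E_def)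
  moreover have "0 < measure_pmf.prob P {n0}"
    using n0(1) by (simp add: measure_pmf_single pmf_positive)
  ultimately have "c \<le> 0" by (simp add: mult_le_0_iff)
  thus ?thesis by (simp add: c_def y_def)
qed

lemma others_consent_outcome_is_PNE:
  assumes n: "n \<in> set_pmf P" and jp: "others_consent (decode n) j p"
  shows "is_PNE Msg g u \<theta> (p(j := reply (decode n j) p j))" (is "is_PNE Msg g u \<theta> ?q")
  unfolding is_PNE_def
proof (intro conjI allI ballI)
  have wf: "well_formed l (decode n l)" for l using set_pmf_P_well_formed[OF n] by blast
  have q: "?q \<in> profiles"
    using others_consent_profiles[OF wf jp] reply_in_Msg[OF wf] by (auto simp: profiles_def)
  thus "?q i \<in> Msg i" for i by (simp add: profiles_def)
  fix i m' assume m': "m' \<in> Msg i"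
  show "U (v i) (g (?q(i := m'))) \<le> U (v i) (g ?q)"
  proof (cases "i = j")
    case True thus ?thesis using reply_best_response[OF n jp] m' by simp
  next
    case ij: False
    show ?thesis
    proof (cases "consents (decode n j) p")
      case True
      have ip: "others_consent (decode n) i p" using jp True ij by (auto simp: others_consent_def)
      have "?q = p" using True by (simp add: reply_consents)
      moreover have "reply (decode n i) p i = p i"
        using jp ij by (simp add: others_consent_def reply_consents)
      ultimately show ?thesis using reply_best_response[OF n ip m'] by simp
    next
      case False
      have "\<not> others_agree i n"
        using others_consent_unique_dissenter[OF card_ge_3 jp False ij] by (auto simp: others_agree_def)
      hence "U (v i) (g ?q) = best i"
        using U_canon_g_eq_best_unless_others_agree[OF n] canon_outcome_others_consent[OF jp]
        by (simp add: canon_g_def)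
      thus ?thesis using U_le_best q m' by (simp add: profiles_def)
    qed
  qed
qed

lemma top_bidder_outcome_is_PNE:
  assumes n: "n \<in> set_pmf P" and none: "\<And>j. \<not> others_agree j n"
  shows "is_PNE Msg g u \<theta> (request (decode n (top_bidder (decode n))))" (is "is_PNE Msg g u \<theta> ?q")
  unfolding is_PNE_def
proof (intro conjI allI ballI)
  have q: "?q \<in> profiles" using set_pmf_P_well_formed[OF n] by (simp add: well_formed_def)
  thus "?q i \<in> Msg i" for i by (simp add: profiles_def)
  fix i m' assume "m' \<in> Msg i"
  moreover have "U (v i) (g ?q) = best i"
    using U_canon_g_eq_best_unless_others_agree[OF n none] none
    by (simp add: canon_g_def canon_outcome_top_bidder others_agree_def)
  ultimately show "U (v i) (g (?q(i := m'))) \<le> U (v i) (g ?q)"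
    using U_le_best q by (simp add: profiles_def)
qed

lemma set_outcome_subset_PNE_outcomes: "set_pmf (outcome canon_g \<rho>) \<subseteq> PNE_outcomes Msg g u \<theta>"
proof
  fix z assume "z \<in> set_pmf (outcome canon_g \<rho>)"
  then obtain n where n: "n \<in> set_pmf P" and z: "z \<in> set_pmf (canon_g n)"
    by (auto simp: outcome_def)
  have "\<exists>q. is_PNE Msg g u \<theta> q \<and> canon_g n = g q"
  proof (cases "\<exists>j. others_agree j n")
    case True
    then obtain j p where "others_consent (decode n) j p" by (auto simp: others_agree_def)
    thus ?thesis
      using others_consent_outcome_is_PNE[OF n] canon_outcome_others_consent by (auto simp: canon_g_def)
  next
    case False
    thus ?thesis
      using top_bidder_outcome_is_PNE[OF n] canon_outcome_top_bidder
      by (auto simp: canon_g_def others_agree_def)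
  qed
  thus "z \<in> PNE_outcomes Msg g u \<theta>" using z by (auto simp: PNE_outcomes_def)
qed

end

context canonical_mechanism
begin

lemma MNE_outcomes_subset_PNE_outcomes:
  "MNE_outcomes canon_Msg canon_g u \<theta> \<subseteq> PNE_outcomes Msg g u \<theta>"
proof
  fix z assume "z \<in> MNE_outcomes canon_Msg canon_g u \<theta>"
  then obtain \<rho> where mne: "is_MNE canon_Msg canon_g u \<theta> \<rho>" and z: "z \<in> set_pmf (outcome canon_g \<rho>)"
    by (auto simp: MNE_outcomes_def)
  interpret canonical_mechanism_MNE Msg g u \<theta> \<rho> by unfold_locales (rule mne)
  show "z \<in> PNE_outcomes Msg g u \<theta>" using set_outcome_subset_PNE_outcomes z by blast
qed

definition unanimous :: "('i \<Rightarrow> nat) \<Rightarrow> 'i \<Rightarrow> nat" where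
  "unanimous m i = to_nat (m, [] :: (('i \<Rightarrow> nat) \<times> nat) list, 0 :: nat, m)"

lemma decode_unanimous: "decode (unanimous m) = (\<lambda>_. (m, [], 0, m))"
  by (rule ext) (simp add: decode_def unanimous_def)

lemma canon_g_unanimous: "canon_g (unanimous m) = g m"
proof -
  have "others_consent (\<lambda>_. (m, [], 0, m)) undefined m"
    by (simp add: others_consent_def consents_def)
  from canon_outcome_others_consent[OF this] show ?thesis
    by (simp add: canon_g_def decode_unanimous reply_def)
qed

lemma is_PNE_unanimous:
  assumes pne: "is_PNE Msg g u \<theta> m"
  shows "is_PNE canon_Msg canon_g u \<theta> (unanimous m)"
  unfolding is_PNE_def
proof (intro conjI allI ballI)
  have m: "m \<in> profiles" using pne by (auto simp: is_PNE_def profiles_def)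
  thus "unanimous m i \<in> canon_Msg i" for i
    by (auto simp: unanimous_def well_formed_def intro: to_nat_in_canon_Msg)
  fix i n' assume n': "n' \<in> canon_Msg i"
  define x :: "'i canon_msg" where "x = from_nat n'"
  have x: "well_formed i x" "to_nat x = n'" using canon_Msg_D[OF n'] by (auto simp: x_def)
  have "others_consent ((decode (unanimous m))(i := x)) i m"
    by (simp add: decode_unanimous others_consent_def consents_def)
  from canon_outcome_others_consent[OF this]
  have "canon_g ((unanimous m)(i := n')) = g (m(i := reply x m i))"
    using decode_fun_upd_to_nat[of "unanimous m" i x] x(2) by (simp add: canon_g_def)
  thus "U (u i \<theta>) (canon_g ((unanimous m)(i := n'))) \<le> U (u i \<theta>) (canon_g (unanimous m))"
    using pne reply_in_Msg[OF x(1) m] by (simp add: is_PNE_def canon_g_unanimous)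
qed

lemma PNE_outcomes_subset_canon_PNE_outcomes:
  "PNE_outcomes Msg g u \<theta> \<subseteq> PNE_outcomes canon_Msg canon_g u \<theta>"
proof
  fix z assume "z \<in> PNE_outcomes Msg g u \<theta>"
  then obtain m where "is_PNE Msg g u \<theta> m" "z \<in> set_pmf (g m)"
    by (auto simp: PNE_outcomes_def)
  thus "z \<in> PNE_outcomes canon_Msg canon_g u \<theta>"
    unfolding PNE_outcomes_def
    by (intro UN_I[of "unanimous m"]) (simp_all add: is_PNE_unanimous canon_g_unanimous)
qed

end

lemma pure_Nash_imp_mixed_Nash_B_implementable:
  fixes u :: "'i::finite \<Rightarrow> 'th \<Rightarrow> 'z::finite \<Rightarrow> real"
  assumes "CARD('i) \<ge> 3" and "pure_Nash_implementable u F"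
  shows "mixed_Nash_B_implementable u F"
proof -
  obtain Msg :: "'i \<Rightarrow> nat set" and g where PNE_F: "\<And>\<theta>. PNE_outcomes Msg g u \<theta> = F \<theta>"
    using assms(2) unfolding pure_Nash_implementable_def by blast
  interpret canonical_mechanism Msg g by unfold_locales (rule assms(1))
  have "F \<theta> \<subseteq> PNE_outcomes canon_Msg canon_g u \<theta>"
    and "PNE_outcomes canon_Msg canon_g u \<theta> \<subseteq> MNE_outcomes canon_Msg canon_g u \<theta>"
    and "MNE_outcomes canon_Msg canon_g u \<theta> \<subseteq> F \<theta>" for \<theta>
    using PNE_outcomes_subset_canon_PNE_outcomes[of u \<theta>] PNE_outcomes_subset_MNE_outcomes
      MNE_outcomes_subset_PNE_outcomes[of u \<theta>]
    by (simp_all add: PNE_F)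
  hence "\<forall>\<theta>. MNE_outcomes canon_Msg canon_g u \<theta> = F \<theta> \<and> PNE_outcomes canon_Msg canon_g u \<theta> = F \<theta>"
    by (meson subset_antisym subset_trans)
  thus ?thesis unfolding mixed_Nash_B_implementable_def by (intro exI)
qed

lemma mixed_Nash_B_imp_mixed_Nash_A_implementable:
  "mixed_Nash_B_implementable u F \<Longrightarrow> mixed_Nash_A_implementable u F"
  unfolding mixed_Nash_B_implementable_def mixed_Nash_A_implementable_def by blast

theorem theorem3:
  fixes u :: "'i::finite \<Rightarrow> 'th::countable \<Rightarrow> 'z::finite \<Rightarrow> real"
    and F :: "'th \<Rightarrow> 'z set"
  assumes "CARD('i) \<ge> 3"
    and "\<And>\<theta>. F \<theta> \<noteq> {}"
  shows "(pure_Nash_implementable u F \<longleftrightarrow> mixed_Nash_A_implementable u F)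
       \<and> (mixed_Nash_A_implementable u F \<longleftrightarrow> mixed_Nash_B_implementable u F)"
  using pure_Nash_imp_mixed_Nash_B_implementable[OF assms(1), of u F]
    mixed_Nash_B_imp_mixed_Nash_A_implementable[of u F]
    mixed_Nash_A_imp_pure_Nash_implementable[of u F]
  by argo

end
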